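(* In the two-source game ($m=2$) with $n_1\ge n_2$, if the pure strategy profile in which all users choose the direct path ($u_1=n_1$, $u_2=n_2$) is optimal (maximizes $TR$), then it is also a Nash equilibrium.
   Context: Two-source network: sources $s_1,s_2$ and destination $d$; source $s_i$ has a set $N_i$ of $n_i$ users. Each user generates an independent Poisson flow of packets of rate $\phi>0$; each direct link $(s_i,d)$ has service rate $\mu>0$; the sidelink between $s_1$ and $s_2$ loses packets independently with probability $q\in[0,1]$, and $\bar q=1-q$. Only pure strategies: a user of $N_1$ chooses DP $(s_1,d)$ or IP $(s_1,s_2,d)$; a user of $N_2$ chooses DP $(s_2,d)$ or IP $(s_2,s_1,d)$. With $u_i$ users of $N_i$ on DP, $T_1=u_1\phi+(n_2-u_2)\bar q\phi$, $T_2=u_2\phi+(n_1-u_1)\bar q\phi$ and $TR=\sum_i\frac{\mu T_i}{T_i+\mu}$. The loss rate of a user of $N_i$ is $\phi\frac{T_i}{T_i+\mu}$ on DP and $\phi\left(q+\bar q\frac{T_j}{T_j+\mu}\right)$ on IP to $s_j$. A Nash equilibrium is a pure profile in which no user can strictly decrease its loss rate by unilaterally switching its route. *)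

theory Defs
  imports Main "HOL.Real"
begin

text \<open>Users of N_i are indexed by k < n_i; a pure strategy
  profile is given by s1, s2 :: nat => bool, where s_i k = True means that user k
  of N_i takes the direct path DP, and False means the indirect path IP.\<close>

definition num_dp :: "(nat \<Rightarrow> bool) \<Rightarrow> nat \<Rightarrow> nat" where
  "num_dp s n = card {k. k < n \<and> s k}"

text \<open>Traffic at s_1 and s_2 (qb = 1 - q).\<close>
definition T1 :: "real \<Rightarrow> real \<Rightarrow> nat \<Rightarrow> nat \<Rightarrow> nat \<Rightarrow> nat \<Rightarrow> real" where
  "T1 phi q n1 n2 u1 u2 = real u1 * phi + (real n2 - real u2) * (1 - q) * phi"

definition T2 :: "real \<Rightarrow> real \<Rightarrow> nat \<Rightarrow> nat \<Rightarrow> nat \<Rightarrow> nat \<Rightarrow> real" where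
  "T2 phi q n1 n2 u1 u2 = real u2 * phi + (real n1 - real u1) * (1 - q) * phi"

definition TR :: "real \<Rightarrow> real \<Rightarrow> real \<Rightarrow> nat \<Rightarrow> nat \<Rightarrow> nat \<Rightarrow> nat \<Rightarrow> real" where
  "TR phi mu q n1 n2 u1 u2 =
     mu * T1 phi q n1 n2 u1 u2 / (T1 phi q n1 n2 u1 u2 + mu)
   + mu * T2 phi q n1 n2 u1 u2 / (T2 phi q n1 n2 u1 u2 + mu)"

definition loss1 :: "real \<Rightarrow> real \<Rightarrow> real \<Rightarrow> nat \<Rightarrow> nat \<Rightarrow>
    (nat \<Rightarrow> bool) \<Rightarrow> (nat \<Rightarrow> bool) \<Rightarrow> nat \<Rightarrow> real" where
  "loss1 phi mu q n1 n2 s1 s2 k =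
     (let u1 = num_dp s1 n1; u2 = num_dp s2 n2;
          t1 = T1 phi q n1 n2 u1 u2; t2 = T2 phi q n1 n2 u1 u2 in
      if s1 k then phi * (t1 / (t1 + mu))
      else phi * (q + (1 - q) * (t2 / (t2 + mu))))"

definition loss2 :: "real \<Rightarrow> real \<Rightarrow> real \<Rightarrow> nat \<Rightarrow> nat \<Rightarrow>
    (nat \<Rightarrow> bool) \<Rightarrow> (nat \<Rightarrow> bool) \<Rightarrow> nat \<Rightarrow> real" where
  "loss2 phi mu q n1 n2 s1 s2 k =
     (let u1 = num_dp s1 n1; u2 = num_dp s2 n2;
          t1 = T1 phi q n1 n2 u1 u2; t2 = T2 phi q n1 n2 u1 u2 in
      if s2 k then phi * (t2 / (t2 + mu))
      else phi * (q + (1 - q) * (t1 / (t1 + mu))))"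

definition nash :: "real \<Rightarrow> real \<Rightarrow> real \<Rightarrow> nat \<Rightarrow> nat \<Rightarrow>
    (nat \<Rightarrow> bool) \<Rightarrow> (nat \<Rightarrow> bool) \<Rightarrow> bool" where
  "nash phi mu q n1 n2 s1 s2 \<longleftrightarrow>
     (\<forall>k<n1. \<not> (loss1 phi mu q n1 n2 (s1(k := \<not> s1 k)) s2 k
                 < loss1 phi mu q n1 n2 s1 s2 k)) \<and>
     (\<forall>k<n2. \<not> (loss2 phi mu q n1 n2 s1 (s2(k := \<not> s2 k)) k
                 < loss2 phi mu q n1 n2 s1 s2 k))"

definition optimal :: "real \<Rightarrow> real \<Rightarrow> real \<Rightarrow> nat \<Rightarrow> nat \<Rightarrow>
    (nat \<Rightarrow> bool) \<Rightarrow> (nat \<Rightarrow> bool) \<Rightarrow> bool" where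
  "optimal phi mu q n1 n2 s1 s2 \<longleftrightarrow>
     (\<forall>t1 t2. TR phi mu q n1 n2 (num_dp t1 n1) (num_dp t2 n2)
               \<le> TR phi mu q n1 n2 (num_dp s1 n1) (num_dp s2 n2))"

end

theory Submission
  imports Defs
begin

text \<open>A user of \<open>N\<^sub>1\<close> leaving the all-DP profile gains iff
  \<open>T\<^sub>2' + \<mu> < q\<^sub>b (T\<^sub>1 + \<mu>)\<close>, where \<open>T\<^sub>1 = n\<^sub>1\<phi>\<close> and \<open>T\<^sub>2' = n\<^sub>2\<phi> + q\<^sub>b\<phi>\<close>.
  This is impossible when \<open>n\<^sub>1 \<le> n\<^sub>2\<close>. When \<open>n\<^sub>2 < n\<^sub>1\<close>, optimality says that the throughput
  won at \<open>s\<^sub>2\<close> by the move is at most the throughput lost at \<open>s\<^sub>1\<close>; cross-multiplied this reads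
  \<open>q\<^sub>b (T\<^sub>1 + \<mu>)(T\<^sub>1 - \<phi> + \<mu>) \<le> (T\<^sub>2' + \<mu>)(n\<^sub>2\<phi> + \<mu>)\<close>, and together with the gain
  condition it forces \<open>n\<^sub>2\<phi> > T\<^sub>1 - \<phi>\<close>, i.e. \<open>n\<^sub>2 \<ge> n\<^sub>1\<close>. The model is symmetric in the two
  sources, so the same argument covers users of \<open>N\<^sub>2\<close>.\<close>

lemma detour_profitable_iff:
  fixes x y mu q :: real
  assumes "0 < mu" "0 \<le> x" "0 \<le> y"
  shows "q + (1 - q) * (y / (y + mu)) < x / (x + mu) \<longleftrightarrow> y + mu < (1 - q) * (x + mu)"
proof -
  have "q + (1 - q) * (y / (y + mu)) < x / (x + mu) \<longleftrightarrow> mu / (x + mu) < (1 - q) * mu / (y + mu)"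
    using assms by (simp add: field_simps)
  also have "\<dots> \<longleftrightarrow> mu * (y + mu) < mu * ((1 - q) * (x + mu))"
    using assms by (simp add: field_simps)
  finally show ?thesis using assms by simp
qed

lemma throughput_increment:
  fixes x d mu :: real
  assumes "0 < mu" "0 \<le> x" "0 \<le> d"
  shows "mu * (x + d) / (x + d + mu) - mu * x / (x + mu) = mu * mu * d / ((x + d + mu) * (x + mu))"
  using assms by (simp add: field_simps)

text \<open>The deviating user sends rate \<open>p\<close>; \<open>a\<close> and \<open>b\<close> are the traffic at its own and at the
  other source, and \<open>c\<close> is the part of its flow surviving the sidelink. The disjunction
  \<open>a \<le> b \<or> b \<le> a - p\<close> holds because both loads are multiples of \<open>p\<close>.\<close>
lemma detour_not_profitable:
  fixes a b p q mu :: real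
  defines "c \<equiv> (1 - q) * p"
  assumes p: "0 < p" and mu: "0 < mu" and q: "0 \<le> q" "q \<le> 1" and ab: "p \<le> a" "0 \<le> b"
    and "a \<le> b \<or> b \<le> a - p"
    and opt: "mu * (a - p) / (a - p + mu) + mu * (b + c) / (b + c + mu)
      \<le> mu * a / (a + mu) + mu * b / (b + mu)"
  shows "\<not> q + (1 - q) * ((b + c) / (b + c + mu)) < a / (a + mu)"
proof
  have "0 \<le> c" using p q by (simp add: c_def)
  assume "q + (1 - q) * ((b + c) / (b + c + mu)) < a / (a + mu)"
  then have detour: "b + c + mu < (1 - q) * (a + mu)"
    using detour_profitable_iff[of mu a "b + c" q] \<open>0 \<le> c\<close> p mu ab by simp
  from \<open>a \<le> b \<or> b \<le> a - p\<close> show False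
  proof
    assume "a \<le> b"
    moreover have "0 \<le> q * (a + mu)" using q p mu ab by simp
    ultimately show False using detour \<open>0 \<le> c\<close> by (simp add: algebra_simps)
  next
    assume "b \<le> a - p"
    have "mu * mu * (c / ((b + c + mu) * (b + mu))) \<le> mu * mu * (p / ((a + mu) * (a - p + mu)))"
      using opt throughput_increment[of mu b c] throughput_increment[of mu "a - p" p] \<open>0 \<le> c\<close> p mu ab
      by simp
    then have "c / ((b + c + mu) * (b + mu)) \<le> p / ((a + mu) * (a - p + mu))"
      by (rule mult_left_le_imp_le) (use mu in simp)
    moreover have "0 < (a + mu) * (a - p + mu)" "0 < (b + c + mu) * (b + mu)"
      using \<open>0 \<le> c\<close> p mu ab by simp_all
    ultimately have "c * ((a + mu) * (a - p + mu)) \<le> p * ((b + c + mu) * (b + mu))"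
      by (simp add: field_simps del: mult_pos_pos)
    then have "(1 - q) * (a + mu) * (a - p + mu) \<le> (b + c + mu) * (b + mu)"
      using p by (simp add: c_def mult.assoc)
    also have "\<dots> < (1 - q) * (a + mu) * (b + mu)"
      using detour mu ab by (intro mult_strict_right_mono) auto
    also have "\<dots> \<le> (1 - q) * (a + mu) * (a - p + mu)"
      using \<open>b \<le> a - p\<close> p q mu ab by (intro mult_left_mono) auto
    finally show False by simp
  qed
qed

lemma num_dp_all_direct: "num_dp (\<lambda>_. True) n = n"
  unfolding num_dp_def by simp

lemma num_dp_one_indirect:
  assumes "k < n"
  shows "num_dp ((\<lambda>_. True)(k := False)) n = n - 1"
proof -
  have "{j. j < n \<and> ((\<lambda>_. True)(k := False)) j} = {..<n} - {k}" by auto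
  then show ?thesis unfolding num_dp_def using assms by simp
qed

lemma TR_swap: "TR phi mu q n1 n2 u1 u2 = TR phi mu q n2 n1 u2 u1"
  unfolding TR_def T1_def T2_def by simp

lemma optimal_swap: "optimal phi mu q n1 n2 s1 s2 \<longleftrightarrow> optimal phi mu q n2 n1 s2 s1"
  unfolding optimal_def by (metis TR_swap)

lemma loss2_swap: "loss2 phi mu q n1 n2 s1 s2 = loss1 phi mu q n2 n1 s2 s1"
  unfolding loss1_def loss2_def T1_def T2_def by (simp add: fun_eq_iff Let_def)

lemma all_direct_no_profitable_deviation:
  assumes phi: "0 < phi" and mu: "0 < mu" and q: "0 \<le> q" "q \<le> 1"
    and opt: "optimal phi mu q n1 n2 (\<lambda>_. True) (\<lambda>_. True)"
    and k: "k < n1"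
  shows "\<not> loss1 phi mu q n1 n2 ((\<lambda>_. True)(k := False)) (\<lambda>_. True) k
           < loss1 phi mu q n1 n2 (\<lambda>_. True) (\<lambda>_. True) k"
proof -
  define a where "a = real n1 * phi"
  define b where "b = real n2 * phi"
  have n1: "real (n1 - 1) = real n1 - 1" using k by simp
  have T: "T1 phi q n1 n2 n1 n2 = a" "T2 phi q n1 n2 n1 n2 = b"
    "T1 phi q n1 n2 (n1 - 1) n2 = a - phi" "T2 phi q n1 n2 (n1 - 1) n2 = b + (1 - q) * phi"
    unfolding T1_def T2_def a_def b_def n1 by (simp_all add: algebra_simps)
  have "TR phi mu q n1 n2 (n1 - 1) n2 \<le> TR phi mu q n1 n2 n1 n2"
    using opt[unfolded optimal_def, rule_format, of "(\<lambda>_. True)(k := False)" "\<lambda>_. True"]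
    unfolding num_dp_one_indirect[OF k] num_dp_all_direct .
  then have shift: "mu * (a - phi) / (a - phi + mu) + mu * (b + (1 - q) * phi) / (b + (1 - q) * phi + mu)
      \<le> mu * a / (a + mu) + mu * b / (b + mu)"
    unfolding TR_def T .
  have "real n1 * phi \<le> real n2 * phi \<or> (real n2 + 1) * phi \<le> real n1 * phi"
    using phi by (simp add: mult_le_cancel_right) linarith
  then have "a \<le> b \<or> b \<le> a - phi"
    unfolding a_def b_def by (simp add: algebra_simps)
  moreover have "phi \<le> a" "0 \<le> b" unfolding a_def b_def using k phi by simp_all
  ultimately have "\<not> q + (1 - q) * ((b + (1 - q) * phi) / (b + (1 - q) * phi + mu)) < a / (a + mu)"
    using detour_not_profitable[OF phi mu q] shift by blast
  moreover have
    "loss1 phi mu q n1 n2 ((\<lambda>_. True)(k := False)) (\<lambda>_. True) k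
       = phi * (q + (1 - q) * ((b + (1 - q) * phi) / (b + (1 - q) * phi + mu)))"
    "loss1 phi mu q n1 n2 (\<lambda>_. True) (\<lambda>_. True) k = phi * (a / (a + mu))"
    unfolding loss1_def Let_def num_dp_all_direct num_dp_one_indirect[OF k] T by simp_all
  ultimately show ?thesis using mult_less_cancel_left_pos[OF phi] by metis
qed

theorem corollary2:
  fixes phi mu q :: real and n1 n2 :: nat
  assumes "phi > 0" and "mu > 0" and "0 \<le> q" and "q \<le> 1"
    and "n1 \<ge> n2"
    and "optimal phi mu q n1 n2 (\<lambda>_. True) (\<lambda>_. True)"
  shows "nash phi mu q n1 n2 (\<lambda>_. True) (\<lambda>_. True)"
proof -
  have "optimal phi mu q n2 n1 (\<lambda>_. True) (\<lambda>_. True)"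
    using assms(6) optimal_swap by blast
  then show ?thesis
    using all_direct_no_profitable_deviation[OF assms(1-4)] assms(6)
    unfolding nash_def loss2_swap by simp
qed

end
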